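(* Let $b$ be a non-extreme point of the closed unit ball of $H^\infty$, and let $\mathcal H(b)$ be the de Branges–Rovnyak space, i.e. the reproducing kernel Hilbert space on the unit disk $\mathbb D$ with kernel $K(z,w)=\frac{1-b(z)\overline{b(w)}}{1-z\overline w}$. For $j\ge0$ let $k_{0,j}(z):=\frac1{j!}\frac{\partial^j}{\partial\overline w^j}K(z,w)\big|_{w=0}$. Then $\inf_{j\ge0}\|k_{0,j}\|_{\mathcal H(b)}>0$.
   Context: $H^\infty$ is the space of bounded holomorphic functions on $\mathbb D$ with sup-norm. $b$ non-extreme in the unit ball of $H^\infty$ is equivalent to $\log(1-|b|^2)\in L^1(\mathbb T)$ for its boundary values; in this case $\mathcal H(b)$ contains the polynomials, and $k_{0,j}\in\mathcal H(b)$ satisfies $\langle h,k_{0,j}\rangle=h^{(j)}(0)/j!$. *)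

theory Defs
  imports "HOL-Analysis.Analysis"
begin

definition Hinf_ball :: "(complex \<Rightarrow> complex) set" where
  "Hinf_ball = {f. f holomorphic_on ball 0 1 \<and> (\<forall>z\<in>ball 0 1. norm (f z) \<le> 1)}"

text \<open>Extreme point of the unit ball of H-infinity (functions identified on the disc):
  b is not the midpoint of two distinct elements of the ball.\<close>
definition Hinf_extreme :: "(complex \<Rightarrow> complex) \<Rightarrow> bool" where
  "Hinf_extreme b \<longleftrightarrow> b \<in> Hinf_ball \<and>
     \<not> (\<exists>g\<in>Hinf_ball. \<exists>h\<in>Hinf_ball. (\<exists>z\<in>ball 0 1. g z \<noteq> h z) \<and>
          (\<forall>z\<in>ball 0 1. b z = (g z + h z) / 2))"

definition dBR_kernel :: "(complex \<Rightarrow> complex) \<Rightarrow> complex \<Rightarrow> complex \<Rightarrow> complex" where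
  "dBR_kernel b z w = (1 - b z * cnj (b w)) / (1 - z * cnj w)"

definition pos_kernel_disc :: "(complex \<Rightarrow> complex \<Rightarrow> complex) \<Rightarrow> bool" where
  "pos_kernel_disc M \<longleftrightarrow> (\<forall>(n::nat) (p::nat \<Rightarrow> complex) (c::nat \<Rightarrow> complex).
      (\<forall>i<n. p i \<in> ball 0 1) \<longrightarrow>
      (let s = (\<Sum>i<n. \<Sum>j<n. c i * cnj (c j) * M (p i) (p j)) in Im s = 0 \<and> Re s \<ge> 0))"

text \<open>RKHS with kernel K on the disc (Aronszajn): f belongs with norm at most C iff
  C^2 K(z,w) - f(z) conj(f(w)) is a positive kernel; the norm is the least such C.\<close>
definition rk_admissible :: "(complex \<Rightarrow> complex \<Rightarrow> complex) \<Rightarrow> (complex \<Rightarrow> complex) \<Rightarrow> real set" where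
  "rk_admissible K f = {C. C \<ge> 0 \<and>
       pos_kernel_disc (\<lambda>z w. complex_of_real (C\<^sup>2) * K z w - f z * cnj (f w))}"

definition rkhs_space :: "(complex \<Rightarrow> complex \<Rightarrow> complex) \<Rightarrow> (complex \<Rightarrow> complex) set" where
  "rkhs_space K = {f. rk_admissible K f \<noteq> {}}"

definition rkhs_norm :: "(complex \<Rightarrow> complex \<Rightarrow> complex) \<Rightarrow> (complex \<Rightarrow> complex) \<Rightarrow> real" where
  "rkhs_norm K f = Inf (rk_admissible K f)"

text \<open>k_{0,j}(z) = (1/j!) d^j/d(conj w)^j K(z,w) at w = 0; as a function of u = conj w
  the kernel is (1 - b z * conj (b (conj u))) / (1 - z u).\<close>
definition k0j :: "(complex \<Rightarrow> complex) \<Rightarrow> nat \<Rightarrow> complex \<Rightarrow> complex" where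
  "k0j b j z = (deriv ^^ j) (\<lambda>u. dBR_kernel b z (cnj u)) 0 / of_nat (fact j)"

end

theory Submission
  imports Defs "HOL-Complex_Analysis.Complex_Analysis"
begin

(* By Aronszajn's characterisation, f lies in H(b) with norm at most C iff
   |sum_i c_i f(p_i)|^2 <= C^2 ||sum_i cnj(c_i) K(.,p_i)||^2 for all finite combinations.
   Let T be multiplication by b on Taylor coefficient sequences and T' its adjoint. Expanding the kernel
   combination in Taylor coefficients x, the right-hand side is C^2 (||x||^2 - ||T' x||^2), and for
   f = k_{0,j} the left-hand side is |<(I - T T') x, e_j>|^2. So Cauchy-Schwarz for the positive form
   I - T T' gives ||k_{0,j}||^2 <= 1 - sum_{i<=j} |b_i|^2, where b_i are the Taylor coefficients of b;
   testing against discrete Cauchy integrals on small circles shows equality. Positivity of the form is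
   the contraction property ||b Y||_2 <= ||Y||_2, obtained for polynomials Y from a discrete Parseval
   identity on roots of unity. Finally, if b = (g + h)/2 with g <> h in the ball, the parallelogram law
   applied to the Taylor coefficients of g and h gives 1 - sum_{i<=j} |b_i|^2 >= sum_{i<=j} |g_i - b_i|^2,
   which is bounded below by a positive constant independent of j. *)

section \<open>Roots of unity and a discrete Parseval identity\<close>

definition unit_root :: "nat \<Rightarrow> complex" where
  "unit_root N = exp (2 * of_real pi * \<i> / of_nat N)"

lemma unit_root_power: "unit_root N ^ k = exp (2 * of_real pi * \<i> * of_nat k / of_nat N)"
  unfolding unit_root_def by (simp add: exp_of_nat_mult[symmetric] mult_ac)

lemma norm_unit_root_power [simp]: "norm (unit_root N ^ k) = 1"
  unfolding unit_root_power by (simp add: norm_exp_eq_Re)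

lemma unit_root_power_mult_cnj [simp]:
  "unit_root N ^ k * cnj (unit_root N) ^ k = 1" "cnj (unit_root N) ^ k * unit_root N ^ k = 1"
proof -
  have "unit_root N ^ k * cnj (unit_root N ^ k) = complex_of_real ((cmod (unit_root N ^ k))\<^sup>2)"
    by (simp only: complex_norm_square)
  then show "unit_root N ^ k * cnj (unit_root N) ^ k = 1" by simp
  then show "cnj (unit_root N) ^ k * unit_root N ^ k = 1" by (simp only: mult.commute)
qed

lemma unit_root_power_sum:
  assumes "N \<ge> 1"
  shows "(\<Sum>l<N. (unit_root N ^ m * cnj (unit_root N) ^ m') ^ l)
           = (if m mod N = m' mod N then of_nat N else 0)"
proof -
  define q where "q = unit_root N ^ m * cnj (unit_root N) ^ m'"
  have "q = 1 \<longleftrightarrow> unit_root N ^ m = unit_root N ^ m'"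
  proof
    assume "q = 1"
    then have "unit_root N ^ m * (cnj (unit_root N) ^ m' * unit_root N ^ m') = unit_root N ^ m'"
      unfolding q_def by (metis mult.assoc mult_1)
    then show "unit_root N ^ m = unit_root N ^ m'" by simp
  qed (simp add: q_def mult.commute)
  also have "\<dots> \<longleftrightarrow> m mod N = m' mod N"
    unfolding unit_root_power using complex_root_unity_eq[OF assms] by simp
  finally have q_eq_1: "q = 1 \<longleftrightarrow> m mod N = m' mod N" .
  have "unit_root N ^ N = 1"
    unfolding unit_root_power using complex_root_unity_eq_1[OF assms, of N] by simp
  then have "q ^ N = 1"
    by (simp add: q_def power_mult_distrib flip: power_mult complex_cnj_power)
      (simp add: mult.commute power_mult)
  then show ?thesis
    using q_eq_1 geometric_sum[of q N] by (auto simp: q_def)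
qed

lemma discrete_parseval:
  fixes p :: "complex poly"
  assumes "degree p < N"
  shows "(\<Sum>l<N. (cmod (poly p (unit_root N ^ l)))\<^sup>2) = real N * (\<Sum>m<N. (cmod (coeff p m))\<^sup>2)"
proof -
  let ?\<omega> = "unit_root N"
  have N: "N \<ge> 1" using assms by simp
  have poly_eq: "poly p z = (\<Sum>m<N. coeff p m * z ^ m)" for z
    unfolding poly_altdef using assms by (intro sum.mono_neutral_left) (auto simp: coeff_eq_0)
  have "complex_of_real (\<Sum>l<N. (cmod (poly p (?\<omega> ^ l)))\<^sup>2)
      = (\<Sum>l<N. \<Sum>m<N. \<Sum>m'<N. coeff p m * cnj (coeff p m') * (?\<omega> ^ m * cnj ?\<omega> ^ m') ^ l)"
    unfolding of_real_sum complex_norm_square poly_eq cnj_sum sum_product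
    by (intro sum.cong refl) (simp add: power_mult_distrib mult_ac flip: power_mult)
  also have "\<dots> = (\<Sum>m<N. \<Sum>m'<N. coeff p m * cnj (coeff p m') * (\<Sum>l<N. (?\<omega> ^ m * cnj ?\<omega> ^ m') ^ l))"
    by (subst sum.swap, subst sum.swap) (simp only: sum_distrib_left)
  also have "\<dots> = (\<Sum>m<N. of_nat N * (coeff p m * cnj (coeff p m)))"
    by (intro sum.cong refl) (simp add: unit_root_power_sum[OF N] if_distrib cong: if_cong)
  also have "\<dots> = complex_of_real (real N * (\<Sum>m<N. (cmod (coeff p m))\<^sup>2))"
    by (simp only: of_real_mult of_real_of_nat_eq of_real_sum complex_norm_square sum_distrib_left)
  finally show ?thesis by (simp only: of_real_eq_iff)
qed

section \<open>Bounded analytic multipliers\<close>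

lemma norm_sum_lessThan_le:
  fixes a :: "nat \<Rightarrow> 'a::banach"
  assumes "summable (\<lambda>k. norm (a k))"
  shows "norm (\<Sum>k<L. a k) \<le> norm (\<Sum>k. a k) + (\<Sum>k. norm (a (k + L)))"
proof -
  have "summable a" using assms by (rule summable_norm_cancel)
  then have "(\<Sum>k<L. a k) = (\<Sum>k. a k) - (\<Sum>k. a (k + L))"
    by (simp add: suminf_split_initial_segment[of a L])
  also have "norm \<dots> \<le> norm (\<Sum>k. a k) + norm (\<Sum>k. a (k + L))"
    by (rule norm_triangle_ineq4)
  also have "norm (\<Sum>k. a (k + L)) \<le> (\<Sum>k. norm (a (k + L)))"
    using assms by (intro summable_norm summable_ignore_initial_segment)
  finally show ?thesis by simp
qed

lemma poly_mult_coeff_norm_le: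
  fixes p q :: "complex poly"
  assumes bound: "\<And>z. norm z = 1 \<Longrightarrow> norm (poly p z) \<le> M" and deg: "degree p + degree q < N"
  shows "(\<Sum>m<N. (cmod (coeff (p * q) m))\<^sup>2) \<le> M\<^sup>2 * (\<Sum>m<N. (cmod (coeff q m))\<^sup>2)"
proof -
  let ?\<omega> = "unit_root N"
  have N: "real N > 0" using deg by simp
  have "real N * (\<Sum>m<N. (cmod (coeff (p * q) m))\<^sup>2) = (\<Sum>l<N. (cmod (poly (p * q) (?\<omega> ^ l)))\<^sup>2)"
    using deg degree_mult_le[of p q] by (intro discrete_parseval[symmetric]) linarith
  also have "\<dots> = (\<Sum>l<N. (cmod (poly p (?\<omega> ^ l)))\<^sup>2 * (cmod (poly q (?\<omega> ^ l)))\<^sup>2)"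
    by (simp add: norm_mult power_mult_distrib)
  also have "\<dots> \<le> (\<Sum>l<N. M\<^sup>2 * (cmod (poly q (?\<omega> ^ l)))\<^sup>2)"
    by (intro sum_mono mult_right_mono power_mono bound) auto
  also have "\<dots> = M\<^sup>2 * (real N * (\<Sum>m<N. (cmod (coeff q m))\<^sup>2))"
    using deg by (simp add: sum_distrib_left[symmetric] discrete_parseval)
  finally show ?thesis using N by (simp add: mult.left_commute[of "real N"])
qed

lemma cauchy_product_norm_le:
  fixes P :: "complex poly"
  assumes bound: "\<And>z. norm z = 1 \<Longrightarrow> norm (poly P z) \<le> M"
  shows "(\<Sum>m\<le>J. (cmod (\<Sum>i\<le>m. coeff P i * y (m - i)))\<^sup>2) \<le> M\<^sup>2 * (\<Sum>m\<le>J. (cmod (y m))\<^sup>2)"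
proof -
  define Y where "Y = (\<Sum>m\<le>J. monom (y m) m)"
  define N where "N = degree P + J + 1"
  have coeff_Y: "coeff Y m = (if m \<le> J then y m else 0)" for m
    by (simp add: Y_def coeff_sum coeff_monom)
  have deg_Y: "degree Y \<le> J"
    unfolding Y_def by (intro degree_sum_le) (auto intro: order.trans[OF degree_monom_le])
  have "(\<Sum>m\<le>J. (cmod (\<Sum>i\<le>m. coeff P i * y (m - i)))\<^sup>2) = (\<Sum>m\<le>J. (cmod (coeff (P * Y) m))\<^sup>2)"
    unfolding coeff_mult coeff_Y by (intro sum.cong refl arg_cong[where f = "\<lambda>x. (cmod x)\<^sup>2"]) auto
  also have "\<dots> \<le> (\<Sum>m<N. (cmod (coeff (P * Y) m))\<^sup>2)"
    by (intro sum_mono2) (auto simp: N_def)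
  also have "\<dots> \<le> M\<^sup>2 * (\<Sum>m<N. (cmod (coeff Y m))\<^sup>2)"
    using deg_Y by (intro poly_mult_coeff_norm_le bound) (auto simp: N_def)
  also have "(\<Sum>m<N. (cmod (coeff Y m))\<^sup>2) = (\<Sum>m\<le>J. (cmod (y m))\<^sup>2)"
    unfolding coeff_Y by (intro sum.mono_neutral_cong_right) (auto simp: N_def)
  finally show ?thesis .
qed

(* The Taylor polynomials of the dilation F(r z) approximate it uniformly on the unit circle, with
   an error given by the tail of an absolutely convergent series. *)
lemma cauchy_product_contraction_dilated:
  fixes \<gamma> :: "nat \<Rightarrow> complex" and F :: "complex \<Rightarrow> complex"
  assumes sums: "\<And>z. norm z < 1 \<Longrightarrow> (\<lambda>k. \<gamma> k * z ^ k) sums F z"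
    and bounded: "\<And>z. norm z < 1 \<Longrightarrow> norm (F z) \<le> 1"
    and r: "0 < r" "r < 1"
  shows "(\<Sum>m\<le>J. (cmod (\<Sum>i\<le>m. \<gamma> i * of_real r ^ i * y (m - i)))\<^sup>2) \<le> (\<Sum>m\<le>J. (cmod (y m))\<^sup>2)"
proof -
  let ?T = "\<Sum>m\<le>J. (cmod (\<Sum>i\<le>m. \<gamma> i * of_real r ^ i * y (m - i)))\<^sup>2"
  let ?Y = "\<Sum>m\<le>J. (cmod (y m))\<^sup>2"
  have "norm (complex_of_real ((1 + r) / 2)) < 1" "norm (complex_of_real r) < norm (complex_of_real ((1 + r) / 2))"
    using r by (simp_all only: norm_of_real) simp_all
  then have summable: "summable (\<lambda>k. norm (\<gamma> k * of_real r ^ k))"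
    using powser_insidea sums sums_summable by metis
  define tail where "tail L = (\<Sum>k. norm (\<gamma> (k + L) * of_real r ^ (k + L)))" for L
  have "tail \<longlonglongrightarrow> 0"
    unfolding tail_def using suminf_exist_split2[OF summable] by simp
  then have "(\<lambda>L. (1 + tail L)\<^sup>2 * ?Y) \<longlonglongrightarrow> (1 + 0)\<^sup>2 * ?Y"
    by (intro tendsto_intros)
  moreover have "?T \<le> (1 + tail L)\<^sup>2 * ?Y" if "J < L" for L
  proof -
    define P where "P = (\<Sum>k<L. monom (\<gamma> k * of_real r ^ k) k)"
    have bound: "norm (poly P z) \<le> 1 + tail L" if z: "norm z = 1" for z
    proof -
      have "norm (poly P z) \<le> norm (\<Sum>k. \<gamma> k * (of_real r * z) ^ k) + tail L"
        using norm_sum_lessThan_le[of "\<lambda>k. \<gamma> k * (of_real r * z) ^ k" L] summable z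
        by (simp add: P_def poly_sum poly_monom tail_def norm_mult norm_power power_mult_distrib mult_ac)
      also have "(\<Sum>k. \<gamma> k * (of_real r * z) ^ k) = F (of_real r * z)"
        using sums[of "of_real r * z"] r z by (simp add: sums_iff norm_mult)
      finally show ?thesis using bounded[of "of_real r * z"] r z by (simp add: norm_mult)
    qed
    have "?T = (\<Sum>m\<le>J. (cmod (\<Sum>i\<le>m. coeff P i * y (m - i)))\<^sup>2)"
      using \<open>J < L\<close> by (intro sum.cong refl arg_cong[where f = "\<lambda>x. (cmod x)\<^sup>2"]) (simp add: P_def coeff_sum)
    also have "\<dots> \<le> (1 + tail L)\<^sup>2 * ?Y"
      using bound by (rule cauchy_product_norm_le)
    finally show ?thesis .
  qed
  ultimately show ?thesis
    by (intro LIMSEQ_le_const) (auto intro: exI[of _ "Suc J"])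
qed

lemma cauchy_product_contraction:
  fixes \<gamma> :: "nat \<Rightarrow> complex" and F :: "complex \<Rightarrow> complex"
  assumes "\<And>z. norm z < 1 \<Longrightarrow> (\<lambda>k. \<gamma> k * z ^ k) sums F z"
    and "\<And>z. norm z < 1 \<Longrightarrow> norm (F z) \<le> 1"
  shows "(\<Sum>m\<le>J. (cmod (\<Sum>i\<le>m. \<gamma> i * y (m - i)))\<^sup>2) \<le> (\<Sum>m\<le>J. (cmod (y m))\<^sup>2)"
proof -
  define T where "T r = (\<Sum>m\<le>J. (cmod (\<Sum>i\<le>m. \<gamma> i * of_real r ^ i * y (m - i)))\<^sup>2)" for r
  have "(T \<longlongrightarrow> T 1) (at_left 1)"
    unfolding T_def by (intro tendsto_intros)
  moreover have "\<forall>\<^sub>F r in at_left 1. T r \<le> (\<Sum>m\<le>J. (cmod (y m))\<^sup>2)"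
    using eventually_at_left_real[of 0 "1::real"]
    by (rule eventually_mono) (auto simp: T_def intro: cauchy_product_contraction_dilated[OF assms])
  ultimately have "T 1 \<le> (\<Sum>m\<le>J. (cmod (y m))\<^sup>2)"
    by (intro tendsto_le[OF trivial_limit_at_left_real tendsto_const])
  then show ?thesis by (simp add: T_def)
qed

lemma coeff_square_sum_le_1:
  fixes \<gamma> :: "nat \<Rightarrow> complex" and F :: "complex \<Rightarrow> complex"
  assumes "\<And>z. norm z < 1 \<Longrightarrow> (\<lambda>k. \<gamma> k * z ^ k) sums F z"
    and "\<And>z. norm z < 1 \<Longrightarrow> norm (F z) \<le> 1"
  shows "(\<Sum>m\<le>J. (cmod (\<gamma> m))\<^sup>2) \<le> 1"
proof -
  define e :: "nat \<Rightarrow> complex" where "e n = (if n = 0 then 1 else 0)" for n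
  have "(\<Sum>i\<le>m. \<gamma> i * e (m - i)) = \<gamma> m" for m
    by (simp add: e_def if_distrib[of "\<lambda>x. _ * x"] cong: if_cong)
  moreover have "(\<Sum>m\<le>J. (cmod (e m))\<^sup>2) = 1"
    by (simp add: e_def if_distrib[of "\<lambda>x. (cmod x)\<^sup>2"] cong: if_cong)
  ultimately show ?thesis
    using cauchy_product_contraction[OF assms, where J = J and y = e] by simp
qed

(* The J-th finite section of the adjoint of multiplication by sum_k gamma_k z^k, acting on
   coefficient sequences. *)
definition toeplitz_adjoint_section :: "(nat \<Rightarrow> complex) \<Rightarrow> nat \<Rightarrow> (nat \<Rightarrow> complex) \<Rightarrow> nat \<Rightarrow> complex" where
  "toeplitz_adjoint_section \<gamma> J y m = (\<Sum>k\<le>J - m. \<gamma> k * y (m + k))"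

lemma toeplitz_adjoint_section_contraction:
  fixes \<gamma> :: "nat \<Rightarrow> complex" and F :: "complex \<Rightarrow> complex"
  assumes "\<And>z. norm z < 1 \<Longrightarrow> (\<lambda>k. \<gamma> k * z ^ k) sums F z"
    and "\<And>z. norm z < 1 \<Longrightarrow> norm (F z) \<le> 1"
  shows "(\<Sum>m\<le>J. (cmod (toeplitz_adjoint_section \<gamma> J y m))\<^sup>2) \<le> (\<Sum>m\<le>J. (cmod (y m))\<^sup>2)"
proof -
  have rev: "(\<Sum>m\<le>J. g m) = (\<Sum>m\<le>J. g (J - m))" for g :: "nat \<Rightarrow> real"
    using sum.atLeastAtMost_rev[of g 0 J] by (simp add: atLeast0AtMost)
  have "toeplitz_adjoint_section \<gamma> J y (J - m) = (\<Sum>i\<le>m. \<gamma> i * y (J - (m - i)))" if "m \<le> J" for m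
    unfolding toeplitz_adjoint_section_def using that by (intro sum.cong) auto
  then have "(\<Sum>m\<le>J. (cmod (toeplitz_adjoint_section \<gamma> J y m))\<^sup>2)
      = (\<Sum>m\<le>J. (cmod (\<Sum>i\<le>m. \<gamma> i * y (J - (m - i))))\<^sup>2)"
    by (subst rev) simp
  also have "\<dots> \<le> (\<Sum>m\<le>J. (cmod (y (J - m)))\<^sup>2)"
    by (rule cauchy_product_contraction[OF assms])
  also have "\<dots> = (\<Sum>m\<le>J. (cmod (y m))\<^sup>2)"
    by (rule rev[symmetric])
  finally show ?thesis .
qed

lemma complex_quadratic_discriminant_le:
  fixes \<beta> :: complex
  assumes nonneg: "\<And>t. 0 \<le> a + 2 * Re (cnj t * \<beta>) + (cmod t)\<^sup>2 * s" and "s > 0"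
  shows "(cmod \<beta>)\<^sup>2 \<le> s * a"
proof -
  define t where "t = - \<beta> / of_real s"
  have "cnj t * \<beta> = - of_real ((cmod \<beta>)\<^sup>2 / s)" "(cmod t)\<^sup>2 = (cmod \<beta>)\<^sup>2 / s\<^sup>2"
    unfolding t_def using \<open>s > 0\<close>
    by (simp_all add: norm_divide power_divide mult.commute flip: complex_norm_square)
  then have "0 \<le> a - (cmod \<beta>)\<^sup>2 / s"
    using nonneg[of t] \<open>s > 0\<close> by (simp add: power2_eq_square)
  then show ?thesis
    using \<open>s > 0\<close> by (simp add: field_simps)
qed

lemma toeplitz_adjoint_section_add_scaled:
  "toeplitz_adjoint_section \<gamma> J (\<lambda>m. y m + t * e m) m
     = toeplitz_adjoint_section \<gamma> J y m + t * toeplitz_adjoint_section \<gamma> J e m"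
  unfolding toeplitz_adjoint_section_def by (simp add: algebra_simps sum.distrib sum_distrib_left)

lemma toeplitz_adjoint_section_unit_vector:
  assumes "j \<le> J"
  shows "toeplitz_adjoint_section \<gamma> J (\<lambda>m. if m = j then 1 else 0) m = (if m \<le> j then \<gamma> (j - m) else 0)"
proof (cases "m \<le> j")
  case True
  then have "toeplitz_adjoint_section \<gamma> J (\<lambda>m. if m = j then 1 else 0) m
      = (\<Sum>k\<le>J - m. if k = j - m then \<gamma> k else 0)"
    unfolding toeplitz_adjoint_section_def by (intro sum.cong) auto
  then show ?thesis using True assms by simp
qed (simp add: toeplitz_adjoint_section_def)

lemma sum_cmod_add_mult_square:
  fixes u v :: "nat \<Rightarrow> complex"
  shows "(\<Sum>m\<in>A. (cmod (u m + t * v m))\<^sup>2) = (\<Sum>m\<in>A. (cmod (u m))\<^sup>2)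
           + 2 * Re (cnj t * (\<Sum>m\<in>A. u m * cnj (v m))) + (cmod t)\<^sup>2 * (\<Sum>m\<in>A. (cmod (v m))\<^sup>2)"
proof -
  have "(cmod (a + t * c))\<^sup>2 = (cmod a)\<^sup>2 + 2 * Re (cnj t * (a * cnj c)) + (cmod t)\<^sup>2 * (cmod c)\<^sup>2" for a c
    unfolding cmod_power2 by (simp add: power2_eq_square algebra_simps)
  then show ?thesis
    by (simp only: sum.distrib sum_distrib_left Re_sum)
qed

(* Cauchy-Schwarz for the positive form |y|^2 - |S y|^2, paired with the unit vector e_j, on which the
   form takes the value 1 - sum_{i<=j} |gamma_i|^2. *)
lemma toeplitz_defect_cauchy_schwarz:
  fixes \<gamma> :: "nat \<Rightarrow> complex" and F :: "complex \<Rightarrow> complex"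
  assumes sums: "\<And>z. norm z < 1 \<Longrightarrow> (\<lambda>k. \<gamma> k * z ^ k) sums F z"
    and bounded: "\<And>z. norm z < 1 \<Longrightarrow> norm (F z) \<le> 1"
    and "j \<le> J" and pos: "1 - (\<Sum>i\<le>j. (cmod (\<gamma> i))\<^sup>2) > 0"
  defines "S \<equiv> toeplitz_adjoint_section \<gamma> J"
  shows "(cmod (y j - (\<Sum>m\<le>j. S y m * cnj (\<gamma> (j - m)))))\<^sup>2
           \<le> (1 - (\<Sum>i\<le>j. (cmod (\<gamma> i))\<^sup>2)) * ((\<Sum>m\<le>J. (cmod (y m))\<^sup>2) - (\<Sum>m\<le>J. (cmod (S y m))\<^sup>2))"
proof -
  define e :: "nat \<Rightarrow> complex" where "e m = (if m = j then 1 else 0)" for m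
  have S_e: "S e m = (if m \<le> j then \<gamma> (j - m) else 0)" for m
    unfolding S_def e_def using \<open>j \<le> J\<close> by (rule toeplitz_adjoint_section_unit_vector)
  have restrict: "{..J} \<inter> {m. m \<le> j} = {..j}"
    using \<open>j \<le> J\<close> by auto
  have e_inner: "(\<Sum>m\<le>J. y m * cnj (e m)) = y j" "(\<Sum>m\<le>J. (cmod (e m))\<^sup>2) = 1"
    using \<open>j \<le> J\<close> by (simp_all add: e_def if_distrib[of "\<lambda>x. _ * cnj x"] if_distrib[of "\<lambda>x. (cmod x)\<^sup>2"] cong: if_cong)
  have S_e_inner: "(\<Sum>m\<le>J. S y m * cnj (S e m)) = (\<Sum>m\<le>j. S y m * cnj (\<gamma> (j - m)))"
    unfolding S_e by (simp add: if_distrib[of "\<lambda>x. _ * cnj x"] sum.If_cases restrict cong: if_cong)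
  have S_e_norm: "(\<Sum>m\<le>J. (cmod (S e m))\<^sup>2) = (\<Sum>i\<le>j. (cmod (\<gamma> i))\<^sup>2)"
    using sum.atLeastAtMost_rev[of "\<lambda>i. (cmod (\<gamma> i))\<^sup>2" 0 j] unfolding S_e
    by (simp add: if_distrib[of "\<lambda>x. (cmod x)\<^sup>2"] sum.If_cases restrict atLeast0AtMost cong: if_cong)
  have "0 \<le> ((\<Sum>m\<le>J. (cmod (y m))\<^sup>2) - (\<Sum>m\<le>J. (cmod (S y m))\<^sup>2))
        + 2 * Re (cnj t * (y j - (\<Sum>m\<le>j. S y m * cnj (\<gamma> (j - m)))))
        + (cmod t)\<^sup>2 * (1 - (\<Sum>i\<le>j. (cmod (\<gamma> i))\<^sup>2))" for t
  proof -
    have "0 \<le> (\<Sum>m\<le>J. (cmod (y m + t * e m))\<^sup>2) - (\<Sum>m\<le>J. (cmod (S y m + t * S e m))\<^sup>2)"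
      using toeplitz_adjoint_section_contraction[OF sums bounded, of J "\<lambda>m. y m + t * e m"]
      by (simp add: S_def toeplitz_adjoint_section_add_scaled)
    then show ?thesis
      unfolding sum_cmod_add_mult_square e_inner S_e_inner S_e_norm by (simp add: algebra_simps)
  qed
  then show ?thesis
    using complex_quadratic_discriminant_le pos by blast
qed

section \<open>Taylor coefficients of functions in the unit ball\<close>

definition taylor_coeff :: "(complex \<Rightarrow> complex) \<Rightarrow> nat \<Rightarrow> complex" where
  "taylor_coeff f n = (deriv ^^ n) f 0 / fact n"

lemma Hinf_ball_holomorphic: "b \<in> Hinf_ball \<Longrightarrow> b holomorphic_on ball 0 1"
  by (simp add: Hinf_ball_def)

lemma Hinf_ball_norm_le_1: "b \<in> Hinf_ball \<Longrightarrow> norm z < 1 \<Longrightarrow> norm (b z) \<le> 1"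
  by (simp add: Hinf_ball_def)

lemma taylor_coeff_sums:
  "f holomorphic_on ball 0 1 \<Longrightarrow> norm z < 1 \<Longrightarrow> (\<lambda>n. taylor_coeff f n * z ^ n) sums f z"
  using holomorphic_power_series[of f 0 1 z] by (simp add: taylor_coeff_def)

lemma Hinf_ball_taylor_sums: "b \<in> Hinf_ball \<Longrightarrow> norm z < 1 \<Longrightarrow> (\<lambda>n. taylor_coeff b n * z ^ n) sums b z"
  by (intro taylor_coeff_sums Hinf_ball_holomorphic)

definition taylor_defect :: "(complex \<Rightarrow> complex) \<Rightarrow> nat \<Rightarrow> real" where
  "taylor_defect b j = 1 - (\<Sum>i\<le>j. (cmod (taylor_coeff b i))\<^sup>2)"

lemma taylor_defect_antimono: "j \<le> k \<Longrightarrow> taylor_defect b k \<le> taylor_defect b j"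
  unfolding taylor_defect_def by (simp add: sum_mono2)

lemma midpoint_taylor_coeff_diff_le:
  assumes b: "b \<in> Hinf_ball" and g: "g \<in> Hinf_ball" and h: "h \<in> Hinf_ball"
    and mid: "\<And>z. norm z < 1 \<Longrightarrow> b z = (g z + h z) / 2"
  shows "(\<Sum>m\<le>J. (cmod (taylor_coeff g m - taylor_coeff b m))\<^sup>2) \<le> taylor_defect b J"
proof -
  define d where "d k = taylor_coeff g k - taylor_coeff b k" for k
  have sums_g: "(\<lambda>k. (taylor_coeff b k + d k) * z ^ k) sums g z" if "norm z < 1" for z
    using Hinf_ball_taylor_sums[OF g that] by (simp add: d_def)
  have sums_h: "(\<lambda>k. (taylor_coeff b k - d k) * z ^ k) sums h z" if z: "norm z < 1" for z
  proof -
    have "(\<lambda>k. 2 * (taylor_coeff b k * z ^ k) - taylor_coeff g k * z ^ k) sums (2 * b z - g z)"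
      by (intro sums_diff sums_mult Hinf_ball_taylor_sums b g z)
    moreover have "2 * b z - g z = h z" using mid[OF z] by (simp add: field_simps)
    ultimately show ?thesis by (simp add: d_def algebra_simps)
  qed
  have "(\<Sum>m\<le>J. (cmod (taylor_coeff b m + d m))\<^sup>2 + (cmod (taylor_coeff b m - d m))\<^sup>2) \<le> 2"
    using coeff_square_sum_le_1[OF sums_g Hinf_ball_norm_le_1[OF g], of J]
      coeff_square_sum_le_1[OF sums_h Hinf_ball_norm_le_1[OF h], of J]
    by (simp add: sum.distrib)
  moreover have "(cmod (a + c))\<^sup>2 + (cmod (a - c))\<^sup>2 = 2 * (cmod a)\<^sup>2 + 2 * (cmod c)\<^sup>2" for a c
    unfolding cmod_power2 by (simp add: power2_eq_square algebra_simps)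
  ultimately have "(\<Sum>m\<le>J. (cmod (d m))\<^sup>2) \<le> taylor_defect b J"
    by (simp add: taylor_defect_def sum.distrib flip: sum_distrib_left)
  then show ?thesis
    by (simp add: d_def)
qed

lemma non_extreme_taylor_defect_lower_bound:
  assumes b: "b \<in> Hinf_ball" and non_extreme: "\<not> Hinf_extreme b"
  obtains \<delta> where "\<delta> > 0" "\<And>j. \<delta> \<le> taylor_defect b j"
proof -
  obtain g h z0 where g: "g \<in> Hinf_ball" and h: "h \<in> Hinf_ball"
    and z0: "norm z0 < 1" "g z0 \<noteq> h z0" and mid: "\<And>z. norm z < 1 \<Longrightarrow> b z = (g z + h z) / 2"
    using b non_extreme unfolding Hinf_extreme_def by auto
  obtain m where m: "taylor_coeff g m \<noteq> taylor_coeff b m"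
  proof (rule ccontr)
    assume "\<not> thesis"
    with that have "taylor_coeff g = taylor_coeff b" by auto
    then have "g z0 = b z0"
      using Hinf_ball_taylor_sums[OF g z0(1)] Hinf_ball_taylor_sums[OF b z0(1)] by (metis sums_unique2)
    with mid[OF z0(1)] z0(2) show False by simp
  qed
  show ?thesis
  proof (rule that)
    show "(cmod (taylor_coeff g m - taylor_coeff b m))\<^sup>2 > 0" using m by simp
    fix j
    have "(cmod (taylor_coeff g m - taylor_coeff b m))\<^sup>2
        \<le> (\<Sum>i\<le>max j m. (cmod (taylor_coeff g i - taylor_coeff b i))\<^sup>2)"
      by (intro member_le_sum) auto
    also have "\<dots> \<le> taylor_defect b (max j m)"
      by (rule midpoint_taylor_coeff_diff_le[OF b g h mid])
    also have "\<dots> \<le> taylor_defect b j"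
      by (intro taylor_defect_antimono) simp
    finally show "(cmod (taylor_coeff g m - taylor_coeff b m))\<^sup>2 \<le> taylor_defect b j" .
  qed
qed

section \<open>Upper bound for the norm of k0j\<close>

lemma has_fps_expansion_cnj_reflect:
  assumes "f holomorphic_on ball 0 1"
  shows "(\<lambda>u. cnj (f (cnj u))) has_fps_expansion Abs_fps (\<lambda>n. cnj (taylor_coeff f n))"
proof (rule has_fps_expansionI)
  have "\<forall>\<^sub>F u in nhds 0. u \<in> ball 0 1"
    by (intro eventually_nhds_in_open) auto
  then show "\<forall>\<^sub>F u in nhds 0. (\<lambda>n. fps_nth (Abs_fps (\<lambda>n. cnj (taylor_coeff f n))) n * u ^ n) sums cnj (f (cnj u))"
  proof eventually_elim
    case (elim u)
    then have "(\<lambda>n. taylor_coeff f n * cnj u ^ n) sums f (cnj u)"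
      by (intro taylor_coeff_sums assms) auto
    then have "(\<lambda>n. cnj (taylor_coeff f n * cnj u ^ n)) sums cnj (f (cnj u))"
      by (simp only: sums_cnj)
    then show ?case by simp
  qed
qed

lemma has_fps_expansion_geometric:
  fixes z :: complex
  shows "(\<lambda>u. inverse (1 - z * u)) has_fps_expansion Abs_fps (\<lambda>n. z ^ n)"
proof (rule has_fps_expansionI)
  have pos: "0 < norm z + 1"
    using norm_ge_zero[of z] by linarith
  then have "\<forall>\<^sub>F u in nhds 0. u \<in> ball 0 (1 / (norm z + 1))"
    by (intro eventually_nhds_in_open) auto
  then show "\<forall>\<^sub>F u in nhds 0. (\<lambda>n. fps_nth (Abs_fps (\<lambda>n. z ^ n)) n * u ^ n) sums inverse (1 - z * u)"
  proof eventually_elim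
    case (elim u)
    then have "norm u * (norm z + 1) < 1"
      using pos by (simp add: pos_less_divide_eq)
    moreover have "norm z * norm u \<le> norm u * (norm z + 1)"
      by (simp add: algebra_simps)
    ultimately have "norm (z * u) < 1"
      by (simp add: norm_mult)
    then show ?case
      using geometric_sums[of "z * u"] by (simp add: power_mult_distrib inverse_eq_divide)
  qed
qed

lemma k0j_eq:
  assumes "b holomorphic_on ball 0 1"
  shows "k0j b j z = z ^ j - b z * (\<Sum>i\<le>j. cnj (taylor_coeff b i) * z ^ (j - i))"
proof -
  define B where "B = Abs_fps (\<lambda>n. cnj (taylor_coeff b n))"
  have "(\<lambda>u. (1 - b z * cnj (b (cnj u))) * inverse (1 - z * u))
      has_fps_expansion (1 - fps_const (b z) * B) * Abs_fps (\<lambda>n. z ^ n)"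
    unfolding B_def using has_fps_expansion_cnj_reflect[OF assms] has_fps_expansion_geometric
    by (intro has_fps_expansion_mult has_fps_expansion_diff has_fps_expansion_cmult_left) auto
  then have expansion: "(\<lambda>u. dBR_kernel b z (cnj u)) has_fps_expansion (1 - fps_const (b z) * B) * Abs_fps (\<lambda>n. z ^ n)"
    by (simp add: dBR_kernel_def divide_inverse)
  have "k0j b j z = fps_nth ((1 - fps_const (b z) * B) * Abs_fps (\<lambda>n. z ^ n)) j"
    unfolding k0j_def fps_nth_fps_expansion[OF expansion] by simp
  also have "\<dots> = (\<Sum>i\<le>j. ((if i = 0 then 1 else 0) - b z * cnj (taylor_coeff b i)) * z ^ (j - i))"
  proof -
    have "fps_nth (1 - fps_const (b z) * B) i = (if i = 0 then 1 else 0) - b z * cnj (taylor_coeff b i)" for i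
      by (simp add: B_def fps_mult_left_const_nth)
    then show ?thesis
      by (simp add: fps_mult_nth atLeast0AtMost)
  qed
  also have "\<dots> = (\<Sum>i\<le>j. (if i = 0 then 1 else 0) * z ^ (j - i))
                    - b z * (\<Sum>i\<le>j. cnj (taylor_coeff b i) * z ^ (j - i))"
    by (simp only: left_diff_distrib sum_subtractf sum_distrib_left mult.assoc)
  also have "(\<Sum>i\<le>j. (if i = 0 then 1 else 0) * z ^ (j - i)) = z ^ j"
    by (simp add: if_distrib[of "\<lambda>x. x * _"] cong: if_cong)
  finally show ?thesis .
qed

definition power_moment :: "nat \<Rightarrow> (nat \<Rightarrow> complex) \<Rightarrow> (nat \<Rightarrow> complex) \<Rightarrow> nat \<Rightarrow> complex" where
  "power_moment n c p m = (\<Sum>i<n. c i * p i ^ m)"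

lemma power_moment_square_sums:
  assumes "\<And>i. i < n \<Longrightarrow> norm (p i) < 1"
  shows "(\<lambda>m. complex_of_real ((cmod (power_moment n c p m))\<^sup>2))
           sums (\<Sum>i<n. \<Sum>k<n. c i * cnj (c k) / (1 - p i * cnj (p k)))"
proof -
  have "complex_of_real ((cmod (power_moment n c p m))\<^sup>2)
       = (\<Sum>i<n. \<Sum>k<n. c i * cnj (c k) * (p i * cnj (p k)) ^ m)" for m
    unfolding complex_norm_square power_moment_def cnj_sum sum_product
    by (intro sum.cong refl) (simp add: power_mult_distrib mult_ac)
  moreover have "(\<lambda>m. \<Sum>i<n. \<Sum>k<n. c i * cnj (c k) * (p i * cnj (p k)) ^ m)
           sums (\<Sum>i<n. \<Sum>k<n. c i * cnj (c k) * (1 / (1 - p i * cnj (p k))))"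
  proof (intro sums_sum sums_mult geometric_sums)
    fix i k assume "i \<in> {..<n}" "k \<in> {..<n}"
    then have "norm (p i) < 1" "norm (p k) < 1" using assms by auto
    then have "norm (p i) * norm (p k) < 1 * 1"
      by (intro mult_strict_mono') auto
    then show "norm (p i * cnj (p k)) < 1"
      by (simp add: norm_mult)
  qed
  ultimately show ?thesis by simp
qed

lemma summable_power_moment_square:
  "(\<And>i. i < n \<Longrightarrow> norm (p i) < 1) \<Longrightarrow> summable (\<lambda>m. (cmod (power_moment n c p m))\<^sup>2)"
  using power_moment_square_sums summable_complex_of_real sums_summable by blast

(* The squared H(b)-norm of sum_i cnj(c_i) K(.,p_i), as a difference of H^2 norms of coefficient
   sequences. *)
definition dBR_gram :: "(complex \<Rightarrow> complex) \<Rightarrow> nat \<Rightarrow> (nat \<Rightarrow> complex) \<Rightarrow> (nat \<Rightarrow> complex) \<Rightarrow> real" where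
  "dBR_gram b n c p = (\<Sum>m. (cmod (power_moment n c p m))\<^sup>2)
                     - (\<Sum>m. (cmod (power_moment n (\<lambda>i. c i * b (p i)) p m))\<^sup>2)"

lemma dBR_kernel_quadratic_form:
  assumes "\<And>i. i < n \<Longrightarrow> norm (p i) < 1"
  shows "(\<Sum>i<n. \<Sum>k<n. c i * cnj (c k) * dBR_kernel b (p i) (p k)) = of_real (dBR_gram b n c p)"
proof -
  have "(\<Sum>i<n. \<Sum>k<n. c i * cnj (c k) * dBR_kernel b (p i) (p k))
      = (\<Sum>i<n. \<Sum>k<n. c i * cnj (c k) / (1 - p i * cnj (p k)))
        - (\<Sum>i<n. \<Sum>k<n. c i * b (p i) * cnj (c k * b (p k)) / (1 - p i * cnj (p k)))"
    unfolding sum_subtractf[symmetric]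
    by (intro sum.cong refl) (simp add: dBR_kernel_def diff_divide_distrib right_diff_distrib mult_ac)
  also have "\<dots> = of_real (dBR_gram b n c p)"
    using power_moment_square_sums[of n p c, OF assms]
      power_moment_square_sums[of n p "\<lambda>i. c i * b (p i)", OF assms]
      summable_power_moment_square[of n p, OF assms]
    unfolding dBR_gram_def sums_iff by (simp add: suminf_of_real mult_ac)
  finally show ?thesis .
qed

lemma rk_admissible_dBR_iff:
  "C \<in> rk_admissible (dBR_kernel b) f \<longleftrightarrow> C \<ge> 0 \<and>
     (\<forall>n c p. (\<forall>i<n. norm (p i) < 1) \<longrightarrow>
        (cmod (\<Sum>i<n. c i * f (p i)))\<^sup>2 \<le> C\<^sup>2 * dBR_gram b n c p)"
proof -
  have "(\<Sum>i<n. \<Sum>k<n. c i * cnj (c k) * (of_real (C\<^sup>2) * dBR_kernel b (p i) (p k) - f (p i) * cnj (f (p k))))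
      = of_real (C\<^sup>2 * dBR_gram b n c p - (cmod (\<Sum>i<n. c i * f (p i)))\<^sup>2)"
    if "\<forall>i<n. norm (p i) < 1" for n c p
  proof -
    have "(\<Sum>i<n. c i * f (p i)) * cnj (\<Sum>i<n. c i * f (p i))
        = (\<Sum>i<n. \<Sum>k<n. c i * cnj (c k) * (f (p i) * cnj (f (p k))))"
      unfolding cnj_sum sum_product by (intro sum.cong refl) (simp add: mult_ac)
    then have "(\<Sum>i<n. \<Sum>k<n. c i * cnj (c k) * (of_real (C\<^sup>2) * dBR_kernel b (p i) (p k) - f (p i) * cnj (f (p k))))
        = of_real (C\<^sup>2) * (\<Sum>i<n. \<Sum>k<n. c i * cnj (c k) * dBR_kernel b (p i) (p k))
          - (\<Sum>i<n. c i * f (p i)) * cnj (\<Sum>i<n. c i * f (p i))"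
      by (simp add: sum_distrib_left right_diff_distrib sum_subtractf mult_ac)
    also have "\<dots> = of_real (C\<^sup>2) * of_real (dBR_gram b n c p) - of_real ((cmod (\<Sum>i<n. c i * f (p i)))\<^sup>2)"
      using that by (simp only: dBR_kernel_quadratic_form complex_norm_square)
    finally show ?thesis by simp
  qed
  then have "(let s = \<Sum>i<n. \<Sum>k<n. c i * cnj (c k) * (of_real (C\<^sup>2) * dBR_kernel b (p i) (p k) - f (p i) * cnj (f (p k)))
              in Im s = 0 \<and> 0 \<le> Re s)
      \<longleftrightarrow> (cmod (\<Sum>i<n. c i * f (p i)))\<^sup>2 \<le> C\<^sup>2 * dBR_gram b n c p"
    if "\<forall>i<n. norm (p i) < 1" for n c p
    using that by (simp only: Let_def Im_complex_of_real Re_complex_of_real) simp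
  then show ?thesis
    unfolding rk_admissible_def pos_kernel_disc_def mem_Collect_eq mem_ball_0 by blast
qed

lemma sum_k0j_eq:
  assumes "b holomorphic_on ball 0 1"
  shows "(\<Sum>i<n. c i * k0j b j (p i)) = power_moment n c p j
           - (\<Sum>m\<le>j. power_moment n (\<lambda>i. c i * b (p i)) p m * cnj (taylor_coeff b (j - m)))"
proof -
  have "(\<Sum>i<n. c i * k0j b j (p i))
      = power_moment n c p j - (\<Sum>i<n. \<Sum>l\<le>j. c i * b (p i) * p i ^ (j - l) * cnj (taylor_coeff b l))"
    unfolding k0j_eq[OF assms] power_moment_def sum_subtractf[symmetric]
    by (intro sum.cong refl) (simp add: right_diff_distrib sum_distrib_left mult_ac)
  also have "(\<Sum>i<n. \<Sum>l\<le>j. c i * b (p i) * p i ^ (j - l) * cnj (taylor_coeff b l))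
      = (\<Sum>l\<le>j. power_moment n (\<lambda>i. c i * b (p i)) p (j - l) * cnj (taylor_coeff b l))"
    unfolding power_moment_def sum_distrib_right by (rule sum.swap)
  also have "\<dots> = (\<Sum>m\<le>j. power_moment n (\<lambda>i. c i * b (p i)) p m * cnj (taylor_coeff b (j - m)))"
    by (rule sum.reindex_bij_witness[where i = "\<lambda>m. j - m" and j = "\<lambda>l. j - l"]) auto
  finally show ?thesis .
qed

lemma toeplitz_adjoint_section_power_moment_tendsto:
  assumes sums: "\<And>z. norm z < 1 \<Longrightarrow> (\<lambda>k. \<gamma> k * z ^ k) sums F z"
    and p: "\<And>i. i < n \<Longrightarrow> norm (p i) < 1"
  shows "(\<lambda>J. toeplitz_adjoint_section \<gamma> J (power_moment n c p) m)
           \<longlonglongrightarrow> power_moment n (\<lambda>i. c i * F (p i)) p m"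
proof -
  have eq: "toeplitz_adjoint_section \<gamma> J (power_moment n c p) m
      = (\<Sum>i<n. c i * p i ^ m * (\<Sum>k<Suc (J - m). \<gamma> k * p i ^ k))" for J
    unfolding toeplitz_adjoint_section_def power_moment_def sum_distrib_left lessThan_Suc_atMost
    by (subst sum.swap) (simp add: power_add mult_ac)
  have "(\<lambda>J. \<Sum>k<Suc (J - m). \<gamma> k * p i ^ k) \<longlonglongrightarrow> F (p i)" if "i < n" for i
  proof -
    have "filterlim (\<lambda>J. Suc (J - m)) sequentially sequentially"
      by (rule filterlim_compose[OF filterlim_Suc filterlim_minus_const_nat_at_top])
    with sums[OF p[OF that]] show ?thesis
      unfolding sums_def by (rule filterlim_compose)
  qed
  then have "(\<lambda>J. \<Sum>i<n. c i * p i ^ m * (\<Sum>k<Suc (J - m). \<gamma> k * p i ^ k))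
      \<longlonglongrightarrow> (\<Sum>i<n. c i * p i ^ m * F (p i))"
    by (intro tendsto_sum tendsto_mult_left) simp
  then show ?thesis
    unfolding eq power_moment_def by (simp add: mult_ac)
qed

lemma toeplitz_defect_cauchy_schwarz_limit:
  fixes \<gamma> :: "nat \<Rightarrow> complex" and F :: "complex \<Rightarrow> complex"
  assumes sums: "\<And>z. norm z < 1 \<Longrightarrow> (\<lambda>k. \<gamma> k * z ^ k) sums F z"
    and bounded: "\<And>z. norm z < 1 \<Longrightarrow> norm (F z) \<le> 1"
    and pos: "1 - (\<Sum>i\<le>j. (cmod (\<gamma> i))\<^sup>2) > 0"
    and y: "summable (\<lambda>m. (cmod (y m))\<^sup>2)" and v: "summable (\<lambda>m. (cmod (v m))\<^sup>2)"
    and S_lim: "\<And>m. (\<lambda>J. toeplitz_adjoint_section \<gamma> J y m) \<longlonglongrightarrow> v m"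
  shows "(cmod (y j - (\<Sum>m\<le>j. v m * cnj (\<gamma> (j - m)))))\<^sup>2
           \<le> (1 - (\<Sum>i\<le>j. (cmod (\<gamma> i))\<^sup>2)) * ((\<Sum>m. (cmod (y m))\<^sup>2) - (\<Sum>m. (cmod (v m))\<^sup>2))"
proof -
  define S where "S J = toeplitz_adjoint_section \<gamma> J y" for J
  let ?s = "1 - (\<Sum>i\<le>j. (cmod (\<gamma> i))\<^sup>2)"
  let ?lhs = "\<lambda>u. (cmod (y j - (\<Sum>m\<le>j. u m * cnj (\<gamma> (j - m)))))\<^sup>2"
  let ?rhs = "\<lambda>u K. ?s * ((\<Sum>m. (cmod (y m))\<^sup>2) - (\<Sum>m\<le>K. (cmod (u m))\<^sup>2))"
  have "?lhs (S J) \<le> ?rhs (S J) K" if "max j K \<le> J" for J K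
  proof -
    have "?lhs (S J) \<le> ?s * ((\<Sum>m\<le>J. (cmod (y m))\<^sup>2) - (\<Sum>m\<le>J. (cmod (S J m))\<^sup>2))"
      unfolding S_def using that pos by (intro toeplitz_defect_cauchy_schwarz[OF sums bounded]) auto
    also have "\<dots> \<le> ?rhs (S J) K"
      using that pos y by (intro mult_left_mono diff_mono sum_le_suminf sum_mono2) auto
    finally show ?thesis .
  qed
  then have partial: "?lhs v \<le> ?rhs v K" for K
    by (intro LIMSEQ_le[of "\<lambda>J. ?lhs (S J)" _ "\<lambda>J. ?rhs (S J) K"])
      (auto intro!: tendsto_intros S_lim exI[of _ "max j K"] simp: S_def)
  have "(\<lambda>K. \<Sum>m<Suc K. (cmod (v m))\<^sup>2) \<longlonglongrightarrow> (\<Sum>m. (cmod (v m))\<^sup>2)"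
    using v by (intro LIMSEQ_Suc summable_LIMSEQ)
  then have "(\<lambda>K. ?rhs v K) \<longlonglongrightarrow> ?s * ((\<Sum>m. (cmod (y m))\<^sup>2) - (\<Sum>m. (cmod (v m))\<^sup>2))"
    unfolding lessThan_Suc_atMost by (intro tendsto_intros)
  then show ?thesis
    using partial by (intro LIMSEQ_le_const) auto
qed

lemma k0j_functional_bound:
  assumes b: "b \<in> Hinf_ball" and p: "\<And>i. i < n \<Longrightarrow> norm (p i) < 1" and pos: "taylor_defect b j > 0"
  shows "(cmod (\<Sum>i<n. c i * k0j b j (p i)))\<^sup>2 \<le> taylor_defect b j * dBR_gram b n c p"
  unfolding sum_k0j_eq[OF Hinf_ball_holomorphic[OF b]] dBR_gram_def taylor_defect_def
  using pos p
  by (intro toeplitz_defect_cauchy_schwarz_limit[OF Hinf_ball_taylor_sums[OF b] Hinf_ball_norm_le_1[OF b]]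
      summable_power_moment_square toeplitz_adjoint_section_power_moment_tendsto[OF Hinf_ball_taylor_sums[OF b]])
    (auto simp: taylor_defect_def)

lemma k0j_admissible:
  assumes "b \<in> Hinf_ball" and "taylor_defect b j > 0"
  shows "sqrt (taylor_defect b j) \<in> rk_admissible (dBR_kernel b) (k0j b j)"
  unfolding rk_admissible_dBR_iff using assms k0j_functional_bound by simp

section \<open>Sharpness of the bound\<close>

(* For j < N, the combination sum_l sample_weight N j rho l * f (sample_point N rho l) is a discrete
   Cauchy integral over the circle of radius rho; it tends to the j-th Taylor coefficient of f as
   rho -> 0. Testing admissibility against it shows that the bound of k0j_admissible is sharp. *)
definition sample_point :: "nat \<Rightarrow> real \<Rightarrow> nat \<Rightarrow> complex" where
  "sample_point N \<rho> l = of_real \<rho> * unit_root N ^ l"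

definition sample_weight :: "nat \<Rightarrow> nat \<Rightarrow> real \<Rightarrow> nat \<Rightarrow> complex" where
  "sample_weight N j \<rho> l = (cnj (unit_root N) ^ j) ^ l / (of_nat N * of_real \<rho> ^ j)"

lemma power_moment_sample_weight:
  assumes "N \<ge> 1"
  shows "power_moment N (sample_weight N j \<rho>) (sample_point N \<rho>) m
           = (if m mod N = j mod N then of_real (\<rho> ^ m / \<rho> ^ j) else 0)"
proof -
  have "power_moment N (sample_weight N j \<rho>) (sample_point N \<rho>) m
      = of_real \<rho> ^ m / (of_nat N * of_real \<rho> ^ j) * (\<Sum>l<N. (unit_root N ^ m * cnj (unit_root N) ^ j) ^ l)"
    unfolding power_moment_def sample_weight_def sample_point_def sum_distrib_left
    by (intro sum.cong refl) (simp add: power_mult_distrib mult_ac flip: power_mult)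
  then show ?thesis
    using assms by (simp add: unit_root_power_sum)
qed

lemma power_moment_sample_weight_square_sum_le:
  assumes "0 < \<rho>" "\<rho> < 1" "j < N"
  shows "(\<Sum>m. (cmod (power_moment N (sample_weight N j \<rho>) (sample_point N \<rho>) m))\<^sup>2) \<le> 1 / (1 - \<rho>\<^sup>2)"
proof -
  let ?x = "power_moment N (sample_weight N j \<rho>) (sample_point N \<rho>)"
  define g where "g m = (if m < j then 0 else (\<rho>\<^sup>2) ^ (m - j))" for m
  have "(\<lambda>i. g (i + j)) sums (1 / (1 - \<rho>\<^sup>2))"
    using assms geometric_sums[of "\<rho>\<^sup>2"] by (simp add: g_def abs_square_less_1)
  then have g: "g sums (1 / (1 - \<rho>\<^sup>2))"
    by (subst (asm) sums_zero_iff_shift) (auto simp: g_def)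
  have "(cmod (?x m))\<^sup>2 \<le> g m" for m
  proof (cases "m < j")
    case True
    then show ?thesis
      using assms by (simp add: power_moment_sample_weight g_def)
  next
    case False
    have "cmod (?x m) \<le> \<rho> ^ m / \<rho> ^ j"
      using assms by (simp add: power_moment_sample_weight norm_divide norm_power)
    also have "\<dots> = \<rho> ^ (m - j)"
      using assms False by (simp add: power_diff)
    finally have "(cmod (?x m))\<^sup>2 \<le> (\<rho> ^ (m - j))\<^sup>2"
      by (intro power_mono) auto
    also have "\<dots> = (\<rho>\<^sup>2) ^ (m - j)"
      by (simp only: power_mult[symmetric] mult.commute)
    finally show ?thesis
      using False by (simp add: g_def)
  qed
  moreover have "summable (\<lambda>m. (cmod (?x m))\<^sup>2)"
    using assms by (intro summable_power_moment_square) (simp add: sample_point_def norm_mult)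
  ultimately have "(\<Sum>m. (cmod (?x m))\<^sup>2) \<le> (\<Sum>m. g m)"
    using g by (intro suminf_le) (auto simp: sums_iff)
  then show ?thesis
    using g by (simp add: sums_iff)
qed

lemma power_series_div_power_tendsto:
  fixes a :: "nat \<Rightarrow> complex"
  assumes sums: "\<And>w. norm w < 1 \<Longrightarrow> (\<lambda>k. a k * w ^ k) sums h w" and below: "\<And>k. k < d \<Longrightarrow> a k = 0"
  shows "((\<lambda>w. h w / w ^ d) \<longlongrightarrow> a d) (at 0)"
proof -
  have "(\<lambda>k. a (k + d) * w ^ k) sums (h w / w ^ d)" if "w \<noteq> 0" "norm w < 1" for w
  proof -
    have "(\<lambda>k. a (k + d) * w ^ (k + d)) sums h w"
      using sums[OF that(2)] by (subst sums_zero_iff_shift) (simp_all add: below)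
    then have "(\<lambda>k. a (k + d) * w ^ (k + d) / w ^ d) sums (h w / w ^ d)"
      by (rule sums_divide)
    then show ?thesis
      using that by (simp add: power_add)
  qed
  then show ?thesis
    using powser_limit_0_strong[of 1 "\<lambda>k. a (k + d)" "\<lambda>w. h w / w ^ d"] by simp
qed

lemma unit_root_filter_sums:
  assumes f: "f holomorphic_on ball 0 1" and w: "norm w < 1" and N: "N \<ge> 1"
  shows "(\<lambda>k. (if (k + m) mod N = j mod N then taylor_coeff f k else 0) * w ^ k)
           sums ((\<Sum>l<N. f (w * unit_root N ^ l) * (unit_root N ^ m * cnj (unit_root N) ^ j) ^ l) / of_nat N)"
proof -
  let ?\<omega> = "unit_root N"
  have "(\<lambda>k. \<Sum>l<N. taylor_coeff f k * (w * ?\<omega> ^ l) ^ k * ((?\<omega> ^ m * cnj ?\<omega> ^ j) ^ l / of_nat N))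
          sums (\<Sum>l<N. f (w * ?\<omega> ^ l) * ((?\<omega> ^ m * cnj ?\<omega> ^ j) ^ l / of_nat N))"
    using w by (intro sums_sum sums_mult2 taylor_coeff_sums f) (simp add: norm_mult)
  moreover have "(\<Sum>l<N. taylor_coeff f k * (w * ?\<omega> ^ l) ^ k * ((?\<omega> ^ m * cnj ?\<omega> ^ j) ^ l / of_nat N))
      = (if (k + m) mod N = j mod N then taylor_coeff f k else 0) * w ^ k" for k
  proof -
    have "(\<Sum>l<N. taylor_coeff f k * (w * ?\<omega> ^ l) ^ k * ((?\<omega> ^ m * cnj ?\<omega> ^ j) ^ l / of_nat N))
        = taylor_coeff f k * w ^ k * (\<Sum>l<N. (?\<omega> ^ (k + m) * cnj ?\<omega> ^ j) ^ l) / of_nat N"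
      by (simp add: sum_distrib_left sum_divide_distrib power_mult_distrib power_add mult_ac flip: power_mult)
    then show ?thesis
      using N by (simp add: unit_root_power_sum)
  qed
  ultimately show ?thesis
    by (simp add: sum_divide_distrib)
qed

lemma power_moment_sample_weight_tendsto:
  assumes f: "f holomorphic_on ball 0 1" and "m \<le> j" "j < N"
  shows "((\<lambda>\<rho>. power_moment N (\<lambda>l. sample_weight N j \<rho> l * f (sample_point N \<rho> l)) (sample_point N \<rho>) m)
           \<longlongrightarrow> taylor_coeff f (j - m)) (at_right 0)"
proof -
  let ?\<omega> = "unit_root N"
  define h where "h w = (\<Sum>l<N. f (w * ?\<omega> ^ l) * (?\<omega> ^ m * cnj ?\<omega> ^ j) ^ l) / of_nat N" for w
  have N: "N \<ge> 1" using \<open>j < N\<close> by simp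
  have "((\<lambda>w. h w / w ^ (j - m)) \<longlongrightarrow> taylor_coeff f (j - m)) (at 0)"
    using power_series_div_power_tendsto[OF unit_root_filter_sums[OF f _ N, of _ m j, folded h_def], of "j - m"]
      \<open>m \<le> j\<close> \<open>j < N\<close> by simp
  moreover have "filterlim (\<lambda>\<rho>::real. complex_of_real \<rho>) (at 0) (at_right 0)"
  proof -
    have "((\<lambda>\<rho>::real. complex_of_real \<rho>) \<longlongrightarrow> of_real 0) (at_right 0)"
      by (intro tendsto_of_real tendsto_ident_at)
    moreover have "\<forall>\<^sub>F \<rho> in at_right 0. complex_of_real \<rho> \<noteq> 0"
      using eventually_at_right_less[of "0::real"] by eventually_elim simp
    ultimately show ?thesis
      by (simp add: filterlim_at)
  qed
  ultimately have "((\<lambda>\<rho>. h (of_real \<rho>) / of_real \<rho> ^ (j - m)) \<longlongrightarrow> taylor_coeff f (j - m)) (at_right 0)"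
    by (rule filterlim_compose[where f = "\<lambda>\<rho>. of_real \<rho>" and g = "\<lambda>w. h w / w ^ (j - m)", unfolded o_def])
  moreover have "\<forall>\<^sub>F \<rho> in at_right 0. h (of_real \<rho>) / of_real \<rho> ^ (j - m)
      = power_moment N (\<lambda>l. sample_weight N j \<rho> l * f (sample_point N \<rho> l)) (sample_point N \<rho>) m"
    using eventually_at_right_less[of "0::real"]
  proof eventually_elim
    case (elim \<rho>)
    obtain d where "j = m + d" using \<open>m \<le> j\<close> le_Suc_ex by blast
    then show ?case
      using elim N
      by (simp add: h_def power_moment_def sample_weight_def sample_point_def sum_divide_distrib
          sum_distrib_left power_add power_mult_distrib field_simps flip: power_mult)
  qed
  ultimately show ?thesis
    by (rule Lim_transform_eventually)
qed

lemma k0j_admissible_sample_bound: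
  assumes b: "b \<in> Hinf_ball" and C: "C \<in> rk_admissible (dBR_kernel b) (k0j b j)"
    and \<rho>: "0 < \<rho>" "\<rho> < 1" and "j < N"
  defines "v \<equiv> power_moment N (\<lambda>l. sample_weight N j \<rho> l * b (sample_point N \<rho> l)) (sample_point N \<rho>)"
  shows "(cmod (1 - (\<Sum>m\<le>j. v m * cnj (taylor_coeff b (j - m)))))\<^sup>2
           \<le> C\<^sup>2 * (1 / (1 - \<rho>\<^sup>2) - (\<Sum>m\<le>j. (cmod (v m))\<^sup>2))"
proof -
  have points: "norm (sample_point N \<rho> l) < 1" for l
    using \<rho> by (simp add: sample_point_def norm_mult)
  have "(\<Sum>l<N. sample_weight N j \<rho> l * k0j b j (sample_point N \<rho> l))
      = 1 - (\<Sum>m\<le>j. v m * cnj (taylor_coeff b (j - m)))"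
    using \<rho> \<open>j < N\<close> unfolding sum_k0j_eq[OF Hinf_ball_holomorphic[OF b]]
    by (simp add: v_def power_moment_sample_weight)
  then have "(cmod (1 - (\<Sum>m\<le>j. v m * cnj (taylor_coeff b (j - m)))))\<^sup>2
      \<le> C\<^sup>2 * dBR_gram b N (sample_weight N j \<rho>) (sample_point N \<rho>)"
    using C points unfolding rk_admissible_dBR_iff by metis
  also have "dBR_gram b N (sample_weight N j \<rho>) (sample_point N \<rho>)
      \<le> 1 / (1 - \<rho>\<^sup>2) - (\<Sum>m\<le>j. (cmod (v m))\<^sup>2)"
    unfolding dBR_gram_def v_def
    using power_moment_sample_weight_square_sum_le[OF \<rho> \<open>j < N\<close>] points
    by (intro diff_mono sum_le_suminf summable_power_moment_square) auto
  finally show ?thesis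
    by (simp add: mult_left_mono)
qed

lemma k0j_admissible_lower_bound:
  assumes b: "b \<in> Hinf_ball" and C: "C \<in> rk_admissible (dBR_kernel b) (k0j b j)"
    and pos: "taylor_defect b j > 0"
  shows "taylor_defect b j \<le> C\<^sup>2"
proof -
  define v where "v \<rho> = power_moment (Suc j)
    (\<lambda>l. sample_weight (Suc j) j \<rho> l * b (sample_point (Suc j) \<rho> l)) (sample_point (Suc j) \<rho>)" for \<rho>
  define t where "t = (\<Sum>m\<le>j. (cmod (taylor_coeff b (j - m)))\<^sup>2)"
  have t: "t = 1 - taylor_defect b j"
    using sum.atLeastAtMost_rev[of "\<lambda>i. (cmod (taylor_coeff b i))\<^sup>2" 0 j]
    by (simp add: t_def taylor_defect_def atLeast0AtMost)
  have v_lim: "((\<lambda>\<rho>. v \<rho> m) \<longlongrightarrow> taylor_coeff b (j - m)) (at_right 0)" if "m \<le> j" for m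
    unfolding v_def using power_moment_sample_weight_tendsto[OF Hinf_ball_holomorphic[OF b] that] by simp
  have "((\<lambda>\<rho>. (cmod (1 - (\<Sum>m\<le>j. v \<rho> m * cnj (taylor_coeff b (j - m)))))\<^sup>2)
      \<longlongrightarrow> (cmod (1 - (\<Sum>m\<le>j. taylor_coeff b (j - m) * cnj (taylor_coeff b (j - m)))))\<^sup>2) (at_right 0)"
    by (intro tendsto_intros tendsto_sum v_lim) auto
  also have "(\<Sum>m\<le>j. taylor_coeff b (j - m) * cnj (taylor_coeff b (j - m))) = of_real t"
    unfolding t_def of_real_sum complex_norm_square ..
  finally have lim_left: "((\<lambda>\<rho>. (cmod (1 - (\<Sum>m\<le>j. v \<rho> m * cnj (taylor_coeff b (j - m)))))\<^sup>2)
      \<longlongrightarrow> (taylor_defect b j)\<^sup>2) (at_right 0)"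
    using pos by (simp add: t)
  have "((\<lambda>\<rho>. C\<^sup>2 * (1 / (1 - \<rho>\<^sup>2) - (\<Sum>m\<le>j. (cmod (v \<rho> m))\<^sup>2))) \<longlongrightarrow> C\<^sup>2 * (1 / (1 - 0\<^sup>2) - t)) (at_right 0)"
    unfolding t_def by (intro tendsto_intros tendsto_sum tendsto_ident_at v_lim) auto
  then have lim_right: "((\<lambda>\<rho>. C\<^sup>2 * (1 / (1 - \<rho>\<^sup>2) - (\<Sum>m\<le>j. (cmod (v \<rho> m))\<^sup>2)))
      \<longlongrightarrow> C\<^sup>2 * taylor_defect b j) (at_right 0)"
    by (simp add: t)
  have "(taylor_defect b j)\<^sup>2 \<le> C\<^sup>2 * taylor_defect b j"
    using eventually_at_right_real[of 0 1]
    by (intro tendsto_le[OF trivial_limit_at_right_real lim_right lim_left])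
      (auto elim!: eventually_mono simp: v_def intro: k0j_admissible_sample_bound[OF b C])
  then show ?thesis
    using pos by (simp add: power2_eq_square)
qed

lemma rkhs_norm_k0j:
  assumes "b \<in> Hinf_ball" and "taylor_defect b j > 0"
  shows "k0j b j \<in> rkhs_space (dBR_kernel b)"
    and "rkhs_norm (dBR_kernel b) (k0j b j) = sqrt (taylor_defect b j)"
proof -
  show "k0j b j \<in> rkhs_space (dBR_kernel b)"
    using k0j_admissible[OF assms] by (auto simp: rkhs_space_def)
  have "sqrt (taylor_defect b j) \<le> C" if "C \<in> rk_admissible (dBR_kernel b) (k0j b j)" for C
  proof -
    have "sqrt (taylor_defect b j) \<le> sqrt (C\<^sup>2)"
      using k0j_admissible_lower_bound[OF assms(1) that assms(2)] by (rule real_sqrt_le_mono)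
    also have "\<dots> = C"
      using that by (simp add: rk_admissible_def)
    finally show ?thesis .
  qed
  then show "rkhs_norm (dBR_kernel b) (k0j b j) = sqrt (taylor_defect b j)"
    unfolding rkhs_norm_def using k0j_admissible[OF assms] by (intro cInf_eq_minimum)
qed

theorem proposition6p8:
  fixes b :: "complex \<Rightarrow> complex"
  assumes "b \<in> Hinf_ball" and "\<not> Hinf_extreme b"
  shows "(\<forall>j. k0j b j \<in> rkhs_space (dBR_kernel b)) \<and>
         (INF j. rkhs_norm (dBR_kernel b) (k0j b j)) > 0"
proof -
  obtain \<delta> where \<delta>: "\<delta> > 0" "\<And>j. \<delta> \<le> taylor_defect b j"
    using non_extreme_taylor_defect_lower_bound[OF assms] by blast
  then have pos: "taylor_defect b j > 0" for j
    using less_le_trans by blast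
  have "0 < sqrt \<delta>"
    using \<delta>(1) by simp
  also have "sqrt \<delta> \<le> (INF j. rkhs_norm (dBR_kernel b) (k0j b j))"
    using \<delta>(2) by (intro cINF_greatest) (simp_all add: rkhs_norm_k0j[OF assms(1) pos])
  finally show ?thesis
    using rkhs_norm_k0j(1)[OF assms(1) pos] by blast
qed

end
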